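(* Let $G$ be a locally compact group, $K$ a compact subgroup of $G$, and $\omega$ a $K$-bi-invariant weight on $G$ with $\omega(e) = 1$. If $(G, K, \omega)$ is a weighted Gelfand pair, then for every $f \in C_c(K\setminus G/K)$, $$\int_G f(x)\,\omega(x)\,\omega(x^{-1})\,dx = \int_G f(x^{-1})\,\omega(x^{-1})\,\omega(x)\,dx.$$
   Context: A weight on $G$ is a continuous function $\omega: G \to (0,\infty)$; it is $K$-bi-invariant if $\omega(k_1 x k_2)=\omega(x)$ for all $x\in G$, $k_1,k_2\in K$. $e$ is the identity of $G$. Integration on $G$ is with respect to a fixed left Haar measure. The weighted convolution is $(f \ast_\omega g)(x) = \int_G f(y) g(y^{-1}x) \frac{\omega(y)\omega(y^{-1}x)}{\omega(x)}\,dy$. $\mathcal{L}^1_\omega(K\setminus G/K)$ is the space of (classes of) measurable $K$-bi-invariant $f:G\to\mathbb{C}$ with $\int_G|f|\omega<\infty$. $(G,K,\omega)$ is a weighted Gelfand pair if $(\mathcal{L}^1_\omega(K\setminus G/K),\ast_\omega)$ is commutative. $C_c(K\setminus G/K)$ is the space of continuous compactly supported $K$-bi-invariant complex functions on $G$. *)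

theory Defs
  imports "HOL-Analysis.Analysis"
begin

text \<open>Convention: the (not necessarily abelian) group G is a type of class group_add,
  written additively: the group product x y is x + y, the inverse x^-1 is - x,
  and the identity e is 0.\<close>

definition topological_group :: "'a::{group_add, topological_space} itself \<Rightarrow> bool" where
  "topological_group _ \<longleftrightarrow>
     continuous_on UNIV (\<lambda>p::'a \<times> 'a. fst p + snd p) \<and> continuous_on (UNIV::'a set) uminus"

definition left_haar_measure :: "'a::{group_add, topological_space} measure \<Rightarrow> bool" where
  "left_haar_measure \<mu> \<longleftrightarrow>
     sets \<mu> = sets borel \<and>
     (\<forall>x A. A \<in> sets borel \<longrightarrow> emeasure \<mu> ((\<lambda>y. x + y) ` A) = emeasure \<mu> A) \<and>
     (\<forall>C. compact C \<longrightarrow> emeasure \<mu> C < \<infinity>) \<and>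
     (\<forall>A. A \<in> sets borel \<longrightarrow> emeasure \<mu> A = (INF U \<in> {U. open U \<and> A \<subseteq> U}. emeasure \<mu> U)) \<and>
     (\<forall>U. open U \<longrightarrow> emeasure \<mu> U = (SUP C \<in> {C. compact C \<and> C \<subseteq> U}. emeasure \<mu> C)) \<and>
     emeasure \<mu> UNIV \<noteq> 0"

definition compact_subgroup :: "'a::{group_add, topological_space} set \<Rightarrow> bool" where
  "compact_subgroup K \<longleftrightarrow> compact K \<and> 0 \<in> K \<and>
     (\<forall>x\<in>K. \<forall>y\<in>K. x + y \<in> K) \<and> (\<forall>x\<in>K. - x \<in> K)"

definition bi_invariant :: "'a::group_add set \<Rightarrow> ('a \<Rightarrow> 'b) \<Rightarrow> bool" where
  "bi_invariant K f \<longleftrightarrow> (\<forall>x. \<forall>k1\<in>K. \<forall>k2\<in>K. f (k1 + x + k2) = f x)"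

definition weight :: "('a::topological_space \<Rightarrow> real) \<Rightarrow> bool" where
  "weight \<omega> \<longleftrightarrow> continuous_on UNIV \<omega> \<and> (\<forall>x. \<omega> x > 0)"

definition wconv :: "'a::{group_add, topological_space} measure \<Rightarrow> ('a \<Rightarrow> real)
    \<Rightarrow> ('a \<Rightarrow> complex) \<Rightarrow> ('a \<Rightarrow> complex) \<Rightarrow> 'a \<Rightarrow> complex" where
  "wconv \<mu> \<omega> f g x =
     (\<integral>y. f y * g (- y + x) * complex_of_real (\<omega> y * \<omega> (- y + x) / \<omega> x) \<partial>\<mu>)"

text \<open>Representatives of elements of L^1_omega(K\G/K).\<close>
definition L1w_biinv :: "'a::{group_add, topological_space} measure \<Rightarrow> ('a \<Rightarrow> real)
    \<Rightarrow> 'a set \<Rightarrow> ('a \<Rightarrow> complex) set" where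
  "L1w_biinv \<mu> \<omega> K = {f. f \<in> borel_measurable \<mu> \<and> bi_invariant K f \<and>
       (\<integral>\<^sup>+ x. ennreal (norm (f x) * \<omega> x) \<partial>\<mu>) < \<infinity>}"

text \<open>Commutativity of the algebra: f *_w g = g *_w f as classes (a.e.).\<close>
definition weighted_gelfand_pair :: "'a::{group_add, topological_space} measure
    \<Rightarrow> 'a set \<Rightarrow> ('a \<Rightarrow> real) \<Rightarrow> bool" where
  "weighted_gelfand_pair \<mu> K \<omega> \<longleftrightarrow>
     (\<forall>f\<in>L1w_biinv \<mu> \<omega> K. \<forall>g\<in>L1w_biinv \<mu> \<omega> K.
        AE x in \<mu>. wconv \<mu> \<omega> f g x = wconv \<mu> \<omega> g f x)"

definition Cc_biinv :: "'a::{group_add, topological_space} set \<Rightarrow> ('a \<Rightarrow> complex) set" where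
  "Cc_biinv K = {f. continuous_on UNIV f \<and> compact (closure {x. f x \<noteq> 0}) \<and> bi_invariant K f}"

end

theory Submission
  imports Defs
begin

text \<open>Let S be the support of f, W a compact neighbourhood of the identity e, and
  D = K S^-1 W K, a compact K-bi-invariant set, so that g = 1_D lies in L^1_\<omega>(K\G/K).
  For x near e the set D contains S^-1 x, hence
  \<omega>(x) (f *_\<omega> g)(x) = \<integral>_S f(y) \<omega>(y) \<omega>(y^-1 x) dy, while
  \<omega>(x) (g *_\<omega> f)(x) = \<integral>_D f(y^-1 x) \<omega>(y) \<omega>(y^-1 x) dy.
  Both are continuous in x, being integrals of continuous kernels over compact sets, and they
  agree almost everywhere by commutativity. Nonempty open sets have positive Haar measure, so
  they agree at x = e, which is the claimed identity.\<close>

lemma topological_group_continuous_on_add: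
  fixes f g :: "'b::topological_space \<Rightarrow> 'a::{group_add, topological_space}"
  assumes "topological_group TYPE('a)" and "continuous_on A f" "continuous_on A g"
  shows "continuous_on A (\<lambda>x. f x + g x)"
proof -
  have "continuous_on UNIV (\<lambda>p::'a \<times> 'a. fst p + snd p)"
    using assms(1) unfolding topological_group_def by blast
  from continuous_on_compose2[OF this continuous_on_Pair[OF assms(2,3)]] show ?thesis
    by simp
qed

lemma topological_group_continuous_on_minus:
  fixes f :: "'b::topological_space \<Rightarrow> 'a::{group_add, topological_space}"
  assumes "topological_group TYPE('a)" and "continuous_on A f"
  shows "continuous_on A (\<lambda>x. - f x)"
proof -
  have "continuous_on (UNIV::'a set) uminus"
    using assms(1) unfolding topological_group_def by blast
  from continuous_on_compose2[OF this assms(2)] show ?thesis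
    by simp
qed

lemma topological_group_continuous_on_diff_left:
  fixes f g :: "'b::topological_space \<Rightarrow> 'a::{group_add, topological_space}"
  assumes "topological_group TYPE('a)" and "continuous_on A f" "continuous_on A g"
  shows "continuous_on A (\<lambda>x. - f x + g x)"
  using assms
  by (intro topological_group_continuous_on_add topological_group_continuous_on_minus)

lemma topological_group_open_translation:
  fixes V :: "'a::{group_add, topological_space} set"
  assumes "topological_group TYPE('a)" and "open V"
  shows "open ((+) a ` V)"
proof -
  have "(+) a ` V = (\<lambda>y. - a + y) -` V"
    by (force simp: image_iff add.assoc[symmetric])
  moreover have "continuous_on UNIV (\<lambda>y::'a. - a + y)"
    using assms(1) by (intro topological_group_continuous_on_diff_left continuous_intros)
  ultimately show ?thesis
    using open_vimage[OF assms(2)] by simp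
qed

lemma left_haar_measureD:
  assumes "left_haar_measure \<mu>"
  shows left_haar_measure_sets: "sets \<mu> = sets borel"
    and left_haar_measure_translation:
      "A \<in> sets borel \<Longrightarrow> emeasure \<mu> ((+) x ` A) = emeasure \<mu> A"
    and left_haar_measure_compact_finite: "compact C \<Longrightarrow> emeasure \<mu> C < \<infinity>"
    and left_haar_measure_inner_regular:
      "open U \<Longrightarrow> emeasure \<mu> U = (SUP C \<in> {C. compact C \<and> C \<subseteq> U}. emeasure \<mu> C)"
    and left_haar_measure_nonzero: "emeasure \<mu> UNIV \<noteq> 0"
  using assms unfolding left_haar_measure_def by (elim conjE; blast)+

lemma left_haar_measure_space: "left_haar_measure \<mu> \<Longrightarrow> space \<mu> = UNIV"
  using sets_eq_imp_space_eq[OF left_haar_measure_sets] by simp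

lemma left_haar_measure_compact_sets:
  fixes C :: "'a::{group_add, t2_space} set"
  assumes "left_haar_measure \<mu>" and "compact C"
  shows "C \<in> sets \<mu>"
  using assms by (simp add: left_haar_measure_sets compact_imp_closed)

text \<open>A null open set would have null translates, hence by compactness every compact set
  would be null, and inner regularity would make the whole group null.\<close>
lemma left_haar_measure_open_nonzero:
  fixes \<mu> :: "'a::{group_add, topological_space} measure"
  assumes tg: "topological_group TYPE('a)" and haar: "left_haar_measure \<mu>"
    and "open V" "v \<in> V"
  shows "emeasure \<mu> V \<noteq> 0"
proof
  assume V_null: "emeasure \<mu> V = 0"
  let ?T = "\<lambda>c. (+) (c + - v) ` V"
  have T_open: "open (?T c)" for c
    using topological_group_open_translation[OF tg \<open>open V\<close>] .
  have T_null: "emeasure \<mu> (?T c) = 0" for c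
    using left_haar_measure_translation[OF haar, of V] \<open>open V\<close> V_null by (simp add: borel_open)
  have T_sets: "?T c \<in> sets \<mu>" for c
    using T_open by (simp add: left_haar_measure_sets[OF haar] borel_open)
  have compact_null: "emeasure \<mu> C = 0" if "compact C" for C
  proof -
    have "C \<subseteq> (\<Union>c\<in>C. ?T c)"
    proof
      fix c assume "c \<in> C"
      moreover have "c \<in> ?T c"
        using \<open>v \<in> V\<close> by (intro image_eqI[of _ _ v]) (simp_all add: add.assoc)
      ultimately show "c \<in> (\<Union>c\<in>C. ?T c)" by blast
    qed
    with \<open>compact C\<close> T_open obtain C' where "finite C'" "C \<subseteq> (\<Union>c\<in>C'. ?T c)"
      by (rule compactE_image)
    then have "emeasure \<mu> C \<le> emeasure \<mu> (\<Union>c\<in>C'. ?T c)"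
      using T_sets by (simp add: emeasure_mono sets.finite_UN)
    also have "\<dots> \<le> (\<Sum>c\<in>C'. emeasure \<mu> (?T c))"
      using \<open>finite C'\<close> T_sets by (intro emeasure_subadditive_finite) auto
    finally show ?thesis
      using T_null by simp
  qed
  have "emeasure \<mu> UNIV = (SUP C \<in> {C. compact C \<and> C \<subseteq> UNIV}. emeasure \<mu> C)"
    by (rule left_haar_measure_inner_regular[OF haar open_UNIV])
  also have "\<dots> = 0"
    using compact_null by (intro SUP_eq_const) auto
  finally show False
    using left_haar_measure_nonzero[OF haar] by blast
qed

lemma left_haar_measure_AE_eq_on_open:
  fixes h1 h2 :: "'a::{group_add, topological_space} \<Rightarrow> 'b::t2_space"
  assumes tg: "topological_group TYPE('a)" and haar: "left_haar_measure \<mu>"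
    and "open U" "continuous_on UNIV h1" "continuous_on UNIV h2"
    and AE: "AE x in \<mu>. x \<in> U \<longrightarrow> h1 x = h2 x" and "x \<in> U"
  shows "h1 x = h2 x"
proof (rule ccontr)
  assume "h1 x \<noteq> h2 x"
  define V where "V = U \<inter> {x. h1 x \<noteq> h2 x}"
  have "open V"
    unfolding V_def using assms(3-5) by (intro open_Int open_Collect_neq)
  moreover have "x \<in> V"
    unfolding V_def using \<open>x \<in> U\<close> \<open>h1 x \<noteq> h2 x\<close> by simp
  ultimately have "emeasure \<mu> V \<noteq> 0"
    by (rule left_haar_measure_open_nonzero[OF tg haar])
  moreover have "V \<in> sets \<mu>"
    using \<open>open V\<close> by (simp add: left_haar_measure_sets[OF haar] borel_open)
  moreover have "{x \<in> space \<mu>. \<not> (x \<in> U \<longrightarrow> h1 x = h2 x)} = V"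
    unfolding V_def left_haar_measure_space[OF haar] by auto
  ultimately show False
    using AE_iff_measurable[of V \<mu> "\<lambda>x. x \<in> U \<longrightarrow> h1 x = h2 x"] AE by simp
qed

lemma borel_measurable_continuous_sets_borel:
  assumes "sets \<mu> = sets borel" and "continuous_on UNIV h"
  shows "h \<in> borel_measurable \<mu>"
  using borel_measurable_continuous_onI[OF assms(2)] measurable_cong_sets[OF assms(1) refl]
  by blast

lemma set_integrable_continuous_compact:
  fixes h :: "'a::t2_space \<Rightarrow> 'b::{banach, second_countable_topology}"
  assumes sets: "sets \<mu> = sets borel" and "compact C" "emeasure \<mu> C < \<infinity>"
    and "continuous_on UNIV h"
  shows "set_integrable \<mu> C h"
proof -
  have "C \<in> sets \<mu>"
    using assms(2) by (simp add: sets compact_imp_closed)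
  obtain B where B: "\<forall>x\<in>C. norm (h x) \<le> B"
    using compact_imp_bounded[OF compact_continuous_image[OF
          continuous_on_subset[OF assms(4)] assms(2)]]
    by (auto simp: bounded_iff)
  show ?thesis
  proof (rule set_integrable_bound)
    show "set_integrable \<mu> C (\<lambda>_. B)"
      unfolding set_integrable_def using \<open>C \<in> sets \<mu>\<close> assms(3) by simp
    show "set_borel_measurable \<mu> C h"
      unfolding set_borel_measurable_def using \<open>C \<in> sets \<mu>\<close>
      by (intro borel_measurable_scaleR borel_measurable_indicator
          borel_measurable_continuous_sets_borel[OF sets assms(4)])
    show "AE x in \<mu>. x \<in> C \<longrightarrow> norm (h x) \<le> norm B"
      using B by (intro AE_I2) (auto intro: order_trans[OF _ abs_ge_self])
  qed
qed

lemma dist_set_integral_le: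
  fixes g h :: "'a \<Rightarrow> 'b::{banach, second_countable_topology}"
  assumes "set_integrable \<mu> C g" "set_integrable \<mu> C h" "C \<in> sets \<mu>" "emeasure \<mu> C < \<infinity>"
    and "\<And>y. y \<in> C \<Longrightarrow> dist (g y) (h y) \<le> d"
  shows "dist (LINT y:C|\<mu>. g y) (LINT y:C|\<mu>. h y) \<le> measure \<mu> C * d"
proof -
  have "dist (LINT y:C|\<mu>. g y) (LINT y:C|\<mu>. h y) = norm (LINT y:C|\<mu>. g y - h y)"
    by (simp add: dist_norm set_integral_diff(2)[OF assms(1,2)])
  also have "\<dots> \<le> (LINT y:C|\<mu>. norm (g y - h y))"
    by (intro set_integral_norm_bound set_integral_diff(1) assms(1,2))
  also have "\<dots> \<le> (LINT y:C|\<mu>. d)"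
  proof (rule set_integral_mono)
    show "set_integrable \<mu> C (\<lambda>y. norm (g y - h y))"
      by (intro set_integrable_norm set_integral_diff(1) assms(1,2))
    show "set_integrable \<mu> C (\<lambda>_. d)"
      unfolding set_integrable_def using assms(3,4) by simp
    show "norm (g y - h y) \<le> d" if "y \<in> C" for y
      using assms(5)[OF that] by (simp add: dist_norm)
  qed
  also have "\<dots> = measure \<mu> C * d"
    using assms(3,4) by (simp add: set_integral_const)
  finally show ?thesis .
qed

text \<open>Uniform continuity of the kernel along the compact fibre \<open>{x0} \<times> C\<close>, in the
  form of the tube lemma, controls the integrand uniformly in \<open>y\<close>.\<close>
lemma continuous_on_set_integral_compact:
  fixes \<mu> :: "'a::t2_space measure"
    and G :: "'p::topological_space \<Rightarrow> 'a \<Rightarrow> 'b::{banach, second_countable_topology}"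
  assumes sets: "sets \<mu> = sets borel" and C: "compact C" "emeasure \<mu> C < \<infinity>"
    and G: "continuous_on UNIV (\<lambda>p. G (fst p) (snd p))"
  shows "continuous_on UNIV (\<lambda>x. LINT y:C|\<mu>. G x y)"
  unfolding continuous_on_def
proof (intro ballI)
  fix x0 :: 'p
  have "C \<in> sets \<mu>"
    using C(1) by (simp add: sets compact_imp_closed)
  have G_fibre: "continuous_on UNIV (G x)" for x
    using continuous_on_compose2[OF G, of UNIV "\<lambda>y. (x, y)"] by (simp add: continuous_intros)
  have "\<forall>\<^sub>F x in at x0. dist (LINT y:C|\<mu>. G x y) (LINT y:C|\<mu>. G x0 y) < e" if "e > 0" for e
  proof -
    define m where "m = measure \<mu> C"
    define d where "d = e / (m + 1)"
    have "m \<ge> 0"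
      by (simp add: m_def)
    then have "d > 0" "m * d < e"
      using \<open>e > 0\<close> by (simp_all add: d_def field_simps)
    define W where "W = {p. dist (G (fst p) (snd p)) (G x0 (snd p)) < d}"
    have "continuous_on UNIV (\<lambda>p::'p \<times> 'a. G x0 (snd p))"
      using continuous_on_compose2[OF G_fibre[of x0], of UNIV snd] by (simp add: continuous_on_snd)
    then have "open W"
      unfolding W_def using G by (intro open_Collect_less continuous_intros)
    moreover have "{x0} \<times> C \<subseteq> W"
      unfolding W_def using \<open>d > 0\<close> by auto
    ultimately obtain V where V: "x0 \<in> V" "open V" "V \<times> C \<subseteq> W"
      using Elementary_Topology.tube_lemma[OF C(1)] by metis
    have "dist (LINT y:C|\<mu>. G x y) (LINT y:C|\<mu>. G x0 y) < e" if "x \<in> V" for x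
    proof -
      have "dist (LINT y:C|\<mu>. G x y) (LINT y:C|\<mu>. G x0 y) \<le> m * d"
        unfolding m_def using V(3) \<open>x \<in> V\<close> \<open>C \<in> sets \<mu>\<close> C(2)
        by (intro dist_set_integral_le set_integrable_continuous_compact[OF sets C G_fibre])
          (auto simp: W_def less_imp_le)
      then show ?thesis
        using \<open>m * d < e\<close> by simp
    qed
    then show ?thesis
      unfolding eventually_at_topological using V(1,2) by blast
  qed
  then show "((\<lambda>x. LINT y:C|\<mu>. G x y) \<longlongrightarrow> (LINT y:C|\<mu>. G x0 y)) (at x0 within UNIV)"
    by (simp add: tendsto_iff)
qed

lemma set_lebesgue_integral_eq_integral:
  assumes "\<And>y. y \<notin> A \<Longrightarrow> h y = 0"
  shows "(LINT y:A|\<mu>. h y) = (\<integral>y. h y \<partial>\<mu>)"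
  unfolding set_lebesgue_integral_def
  by (rule Bochner_Integration.integral_cong) (use assms in \<open>auto simp: indicator_def\<close>)

lemma L1w_biinv_bounded_compact_support:
  fixes \<mu> :: "'a::{group_add, t2_space} measure"
  assumes sets: "sets \<mu> = sets borel" and "compact C" "emeasure \<mu> C < \<infinity>"
    and "weight \<omega>" and "h \<in> borel_measurable \<mu>" "bi_invariant K h"
    and h_bound: "\<And>x. norm (h x) \<le> B" and h_supp: "\<And>x. h x \<noteq> 0 \<Longrightarrow> x \<in> C"
  shows "h \<in> L1w_biinv \<mu> \<omega> K"
proof -
  have "C \<in> sets \<mu>"
    using assms(2) by (simp add: sets compact_imp_closed)
  have \<omega>_cont: "continuous_on C \<omega>" and \<omega>_pos: "\<And>x. \<omega> x > 0"
    using \<open>weight \<omega>\<close> continuous_on_subset unfolding weight_def by blast+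
  obtain M where M: "\<forall>x\<in>C. \<bar>\<omega> x\<bar> \<le> M"
    using compact_imp_bounded[OF compact_continuous_image[OF \<omega>_cont assms(2)]]
    by (auto simp: bounded_iff)
  have "ennreal (norm (h x) * \<omega> x) \<le> ennreal (B * M) * indicator C x" for x
  proof (cases "x \<in> C")
    case True
    then have "norm (h x) * \<omega> x \<le> B * M"
      using M h_bound \<omega>_pos[of x] order_trans[OF norm_ge_zero h_bound]
      by (intro mult_mono) auto
    then show ?thesis
      using True by (simp add: ennreal_leI)
  next
    case False
    then have "h x = 0"
      using h_supp by blast
    then show ?thesis
      by simp
  qed
  then have "(\<integral>\<^sup>+ x. ennreal (norm (h x) * \<omega> x) \<partial>\<mu>)
      \<le> (\<integral>\<^sup>+ x. ennreal (B * M) * indicator C x \<partial>\<mu>)"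
    by (rule nn_integral_mono)
  also have "\<dots> = ennreal (B * M) * emeasure \<mu> C"
    using \<open>C \<in> sets \<mu>\<close> by (rule nn_integral_cmult_indicator)
  also have "\<dots> < \<infinity>"
    using assms(3) by (simp add: ennreal_mult_less_top)
  finally show ?thesis
    unfolding L1w_biinv_def using assms(5,6) by blast
qed

lemma indicator_in_L1w_biinv:
  fixes \<mu> :: "'a::{group_add, t2_space} measure"
  assumes haar: "left_haar_measure \<mu>" and "weight \<omega>"
    and "compact D" "bi_invariant K (indicator D :: 'a \<Rightarrow> complex)"
  shows "indicator D \<in> L1w_biinv \<mu> \<omega> K"
proof (rule L1w_biinv_bounded_compact_support[where B = 1])
  show "sets \<mu> = sets borel"
    by (rule left_haar_measure_sets[OF haar])
  show "emeasure \<mu> D < \<infinity>"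
    by (rule left_haar_measure_compact_finite[OF haar \<open>compact D\<close>])
  show "indicator D \<in> borel_measurable \<mu>"
    using left_haar_measure_compact_sets[OF haar \<open>compact D\<close>] by simp
  show "norm (indicator D x :: complex) \<le> 1" "indicator D x \<noteq> (0::complex) \<Longrightarrow> x \<in> D" for x
    by (simp_all add: indicator_def)
qed fact+

definition double_coset_hull :: "'a::group_add set \<Rightarrow> 'a set \<Rightarrow> 'a set" where
  "double_coset_hull K A = (\<lambda>(k1, a, k2). k1 + a + k2) ` (K \<times> A \<times> K)"

lemma double_coset_hull_iff:
  "x \<in> double_coset_hull K A \<longleftrightarrow> (\<exists>k1\<in>K. \<exists>a\<in>A. \<exists>k2\<in>K. x = k1 + a + k2)"
  unfolding double_coset_hull_def by force

lemma subset_double_coset_hull: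
  assumes "0 \<in> K"
  shows "A \<subseteq> double_coset_hull K A"
proof
  fix a assume "a \<in> A"
  moreover have "a = 0 + a + 0"
    by simp
  ultimately show "a \<in> double_coset_hull K A"
    unfolding double_coset_hull_iff using assms by blast
qed

lemma compact_double_coset_hull:
  fixes K A :: "'a::{group_add, topological_space} set"
  assumes "topological_group TYPE('a)" and "compact K" "compact A"
  shows "compact (double_coset_hull K A)"
  unfolding double_coset_hull_def case_prod_beta
  using assms
  by (intro compact_continuous_image compact_Times topological_group_continuous_on_add
      continuous_intros)

lemma double_coset_hull_translate:
  assumes "compact_subgroup K" and "k1 \<in> K" "k2 \<in> K" "x \<in> double_coset_hull K A"
  shows "k1 + x + k2 \<in> double_coset_hull K A"
proof -
  obtain l1 a l2 where "l1 \<in> K" "a \<in> A" "l2 \<in> K" "x = l1 + a + l2"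
    using assms(4) unfolding double_coset_hull_iff by blast
  moreover have "k1 + l1 \<in> K" "l2 + k2 \<in> K"
    using assms(1-3) \<open>l1 \<in> K\<close> \<open>l2 \<in> K\<close> unfolding compact_subgroup_def by auto
  moreover have "k1 + (l1 + a + l2) + k2 = (k1 + l1) + a + (l2 + k2)"
    by (simp add: add.assoc)
  ultimately show ?thesis
    unfolding double_coset_hull_iff by metis
qed

lemma bi_invariant_indicator_double_coset_hull:
  assumes "compact_subgroup K"
  shows "bi_invariant K (indicator (double_coset_hull K A))"
  unfolding bi_invariant_def
proof (intro allI ballI)
  fix x k1 k2 assume "k1 \<in> K" "k2 \<in> K"
  then have "- k1 \<in> K" "- k2 \<in> K"
    using assms unfolding compact_subgroup_def by auto
  have "x = - k1 + (k1 + x + k2) + - k2"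
    by (simp add: add.assoc)
  then have "k1 + x + k2 \<in> double_coset_hull K A \<longleftrightarrow> x \<in> double_coset_hull K A"
    using double_coset_hull_translate[OF assms] \<open>k1 \<in> K\<close> \<open>k2 \<in> K\<close> \<open>- k1 \<in> K\<close> \<open>- k2 \<in> K\<close>
    by metis
  then show "indicator (double_coset_hull K A) (k1 + x + k2) = indicator (double_coset_hull K A) x"
    by (simp add: indicator_def)
qed

lemma wconv_indicator_left:
  "wconv \<mu> \<omega> (indicator D) f x
     = (LINT y:D|\<mu>. f (- y + x) * complex_of_real (\<omega> y * \<omega> (- y + x))) / complex_of_real (\<omega> x)"
proof -
  have "wconv \<mu> \<omega> (indicator D) f x
      = (LINT y:D|\<mu>. f (- y + x) * complex_of_real (\<omega> y * \<omega> (- y + x)) / complex_of_real (\<omega> x))"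
    unfolding wconv_def set_lebesgue_integral_def
    by (intro Bochner_Integration.integral_cong) (simp_all add: indicator_def)
  then show ?thesis
    by simp
qed

lemma wconv_indicator_right:
  assumes f_supp: "\<And>y. f y \<noteq> 0 \<Longrightarrow> y \<in> S" and D: "\<And>y. y \<in> S \<Longrightarrow> - y + x \<in> D"
  shows "wconv \<mu> \<omega> f (indicator D) x
     = (LINT y:S|\<mu>. f y * complex_of_real (\<omega> y * \<omega> (- y + x))) / complex_of_real (\<omega> x)"
proof -
  have "wconv \<mu> \<omega> f (indicator D) x
      = (LINT y:S|\<mu>. f y * complex_of_real (\<omega> y * \<omega> (- y + x)) / complex_of_real (\<omega> x))"
    unfolding wconv_def set_lebesgue_integral_def
  proof (intro Bochner_Integration.integral_cong refl)
    fix y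
    show "f y * indicator D (- y + x) * complex_of_real (\<omega> y * \<omega> (- y + x) / \<omega> x)
        = indicator S y *\<^sub>R (f y * complex_of_real (\<omega> y * \<omega> (- y + x)) / complex_of_real (\<omega> x))"
    proof (cases "y \<in> S")
      case True
      then show ?thesis
        using D by simp
    next
      case False
      then show ?thesis
        using f_supp by fastforce
    qed
  qed
  then show ?thesis
    by simp
qed

lemma Cc_biinv_subset_L1w_biinv:
  fixes \<mu> :: "'a::{group_add, t2_space} measure"
  assumes "left_haar_measure \<mu>" and "weight \<omega>"
  shows "Cc_biinv K \<subseteq> L1w_biinv \<mu> \<omega> K"
proof
  fix f assume "f \<in> Cc_biinv K"
  then have f_cont: "continuous_on UNIV f" and "compact (closure {x. f x \<noteq> 0})"
    and "bi_invariant K f"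
    unfolding Cc_biinv_def by auto
  moreover obtain B where "B > 0" "\<forall>x\<in>closure {x. f x \<noteq> 0}. norm (f x) \<le> B"
    using compact_imp_bounded[OF compact_continuous_image[OF
          continuous_on_subset[OF f_cont] \<open>compact (closure {x. f x \<noteq> 0})\<close>]]
    by (auto simp: bounded_pos)
  then have "norm (f x) \<le> B" for x
    using closure_subset[of "{x. f x \<noteq> 0}"] by (cases "f x = 0") auto
  ultimately show "f \<in> L1w_biinv \<mu> \<omega> K"
    using assms closure_subset[of "{x. f x \<noteq> 0}"]
    by (intro L1w_biinv_bounded_compact_support[where C = "closure {x. f x \<noteq> 0}"]
        left_haar_measure_sets left_haar_measure_compact_finite
        borel_measurable_continuous_sets_borel) auto
qed

lemma bi_invariant_double_coset_neighbourhood: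
  fixes S :: "'a::{group_add, topological_space} set"
  assumes "topological_group TYPE('a)" and "locally_compact_space (euclidean :: 'a topology)"
    and "compact_subgroup K" and "compact S"
  obtains U D where "open U" "0 \<in> U" "compact D" "bi_invariant K (indicator D)"
    "\<And>x y. x \<in> U \<Longrightarrow> y \<in> S \<Longrightarrow> - y + x \<in> D"
proof -
  have "\<exists>U W. open U \<and> compact W \<and> (0::'a) \<in> U \<and> U \<subseteq> W"
    using assms(2) unfolding locally_compact_space_def by simp
  then obtain U W :: "'a set" where "open U" "compact W" "0 \<in> U" "U \<subseteq> W"
    by blast
  define A where "A = (\<lambda>(s, w). - s + w) ` (S \<times> W)"
  define D where "D = double_coset_hull K A"
  have "compact A"
    unfolding A_def case_prod_beta using assms(1) \<open>compact S\<close> \<open>compact W\<close>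
    by (intro compact_continuous_image compact_Times topological_group_continuous_on_diff_left
        continuous_intros)
  moreover have "compact K" "0 \<in> K"
    using assms(3) unfolding compact_subgroup_def by auto
  ultimately have "compact D"
    unfolding D_def using assms(1) by (intro compact_double_coset_hull)
  moreover have "- y + x \<in> D" if "x \<in> U" "y \<in> S" for x y
  proof -
    have "- y + x \<in> A"
      unfolding A_def using that \<open>U \<subseteq> W\<close> by force
    then show ?thesis
      unfolding D_def using subset_double_coset_hull[OF \<open>0 \<in> K\<close>] by blast
  qed
  moreover have "bi_invariant K (indicator D)"
    unfolding D_def by (rule bi_invariant_indicator_double_coset_hull[OF assms(3)])
  ultimately show ?thesis
    using that[OF \<open>open U\<close> \<open>0 \<in> U\<close>] by blast
qed

lemma continuous_on_convolution_kernels: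
  fixes f :: "'a::{group_add, topological_space} \<Rightarrow> complex"
  assumes tg: "topological_group TYPE('a)"
    and f_cont: "continuous_on UNIV f" and \<omega>_cont: "continuous_on UNIV \<omega>"
  shows "continuous_on UNIV
      (\<lambda>p::'a \<times> 'a. f (snd p) * complex_of_real (\<omega> (snd p) * \<omega> (- snd p + fst p)))"
    and "continuous_on UNIV
      (\<lambda>p::'a \<times> 'a. f (- snd p + fst p) * complex_of_real (\<omega> (snd p) * \<omega> (- snd p + fst p)))"
proof -
  have "continuous_on UNIV (\<lambda>p::'a \<times> 'a. - snd p + fst p)"
    using tg by (intro topological_group_continuous_on_diff_left continuous_intros)
  then have "continuous_on UNIV (\<lambda>p::'a \<times> 'a. \<omega> (- snd p + fst p))"
    and "continuous_on UNIV (\<lambda>p::'a \<times> 'a. f (- snd p + fst p))"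
    using continuous_on_compose2[OF \<omega>_cont] continuous_on_compose2[OF f_cont] by auto
  moreover have "continuous_on UNIV (\<lambda>p::'a \<times> 'a. \<omega> (snd p))"
    and "continuous_on UNIV (\<lambda>p::'a \<times> 'a. f (snd p))"
    using continuous_on_compose2[OF \<omega>_cont continuous_on_snd[OF continuous_on_id]]
      continuous_on_compose2[OF f_cont continuous_on_snd[OF continuous_on_id]] by auto
  ultimately show
    "continuous_on UNIV
      (\<lambda>p::'a \<times> 'a. f (snd p) * complex_of_real (\<omega> (snd p) * \<omega> (- snd p + fst p)))"
    "continuous_on UNIV
      (\<lambda>p::'a \<times> 'a. f (- snd p + fst p) * complex_of_real (\<omega> (snd p) * \<omega> (- snd p + fst p)))"
    by (auto intro!: continuous_on_mult continuous_on_of_real)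
qed

lemma weighted_gelfand_pair_indicator_commute:
  fixes \<mu> :: "'a::{group_add, t2_space} measure" and f :: "'a \<Rightarrow> complex"
  assumes tg: "topological_group TYPE('a)" and haar: "left_haar_measure \<mu>"
    and "weight \<omega>" and "weighted_gelfand_pair \<mu> K \<omega>"
    and "f \<in> L1w_biinv \<mu> \<omega> K" "indicator D \<in> L1w_biinv \<mu> \<omega> K"
    and f_cont: "continuous_on UNIV f" and f_supp: "\<And>y. f y \<noteq> 0 \<Longrightarrow> y \<in> S"
    and "compact S" "compact D"
    and "open U" and D: "\<And>x y. x \<in> U \<Longrightarrow> y \<in> S \<Longrightarrow> - y + x \<in> D" and "x \<in> U"
  shows "(LINT y:S|\<mu>. f y * complex_of_real (\<omega> y * \<omega> (- y + x)))
       = (LINT y:D|\<mu>. f (- y + x) * complex_of_real (\<omega> y * \<omega> (- y + x)))"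
proof -
  define a where "a x = (LINT y:S|\<mu>. f y * complex_of_real (\<omega> y * \<omega> (- y + x)))" for x
  define b where "b x = (LINT y:D|\<mu>. f (- y + x) * complex_of_real (\<omega> y * \<omega> (- y + x)))" for x
  have \<omega>_cont: "continuous_on UNIV \<omega>" and \<omega>_pos: "\<And>x. \<omega> x > 0"
    using \<open>weight \<omega>\<close> unfolding weight_def by auto
  have "continuous_on UNIV a" "continuous_on UNIV b"
    unfolding a_def b_def
    using left_haar_measure_sets[OF haar] \<open>compact S\<close> \<open>compact D\<close>
      left_haar_measure_compact_finite[OF haar]
      continuous_on_convolution_kernels[OF tg f_cont \<omega>_cont]
    by (auto intro!: continuous_on_set_integral_compact)
  moreover have "a x = b x" if "x \<in> U"
    and commute: "wconv \<mu> \<omega> f (indicator D) x = wconv \<mu> \<omega> (indicator D) f x" for x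
  proof -
    have "a x / complex_of_real (\<omega> x) = wconv \<mu> \<omega> f (indicator D) x"
      unfolding a_def
      by (rule wconv_indicator_right[OF f_supp D[OF \<open>x \<in> U\<close>], symmetric])
    also have "\<dots> = b x / complex_of_real (\<omega> x)"
      unfolding commute b_def by (rule wconv_indicator_left)
    finally show "a x = b x"
      using \<omega>_pos[of x] by simp
  qed
  then have "AE x in \<mu>. x \<in> U \<longrightarrow> a x = b x"
    using assms(4)[unfolded weighted_gelfand_pair_def, rule_format, OF assms(5,6)]
    by (auto elim: AE_mp)
  ultimately have "a x = b x"
    by (rule left_haar_measure_AE_eq_on_open[OF tg haar \<open>open U\<close>]) (rule \<open>x \<in> U\<close>)
  then show ?thesis
    unfolding a_def b_def .
qed

theorem mainTheorem7:
  fixes \<mu> :: "'a::{group_add, t2_space} measure"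
    and K :: "'a set" and \<omega> :: "'a \<Rightarrow> real" and f :: "'a \<Rightarrow> complex"
  assumes "topological_group TYPE('a)"
    and "locally_compact_space (euclidean :: 'a topology)"
    and "left_haar_measure \<mu>"
    and "compact_subgroup K"
    and "weight \<omega>" and "bi_invariant K \<omega>" and "\<omega> 0 = 1"
    and "weighted_gelfand_pair \<mu> K \<omega>"
    and "f \<in> Cc_biinv K"
  shows "(\<integral>x. f x * complex_of_real (\<omega> x * \<omega> (- x)) \<partial>\<mu>)
       = (\<integral>x. f (- x) * complex_of_real (\<omega> (- x) * \<omega> x) \<partial>\<mu>)"
proof -
  define S where "S = closure {x. f x \<noteq> 0}"
  have f_cont: "continuous_on UNIV f" and "compact S"
    using assms(9) unfolding Cc_biinv_def S_def by auto
  have f_supp: "\<And>y. f y \<noteq> 0 \<Longrightarrow> y \<in> S"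
    unfolding S_def by (rule subsetD[OF closure_subset]) simp
  obtain U D :: "'a set"
    where "open U" "0 \<in> U" "compact D" "bi_invariant K (indicator D :: 'a \<Rightarrow> complex)"
      and D: "\<And>x y. x \<in> U \<Longrightarrow> y \<in> S \<Longrightarrow> - y + x \<in> D"
    using bi_invariant_double_coset_neighbourhood[OF assms(1,2,4) \<open>compact S\<close>] by blast
  have f_minus_supp: "f (- y) = 0" if "y \<notin> D" for y
    using D[OF \<open>0 \<in> U\<close>, of "- y"] f_supp[of "- y"] that by auto
  have "f \<in> L1w_biinv \<mu> \<omega> K"
    using Cc_biinv_subset_L1w_biinv[OF assms(3,5)] assms(9) by (rule subsetD)
  moreover have "indicator D \<in> L1w_biinv \<mu> \<omega> K"
    by (rule indicator_in_L1w_biinv) fact+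
  ultimately have "(LINT y:S|\<mu>. f y * complex_of_real (\<omega> y * \<omega> (- y + 0)))
      = (LINT y:D|\<mu>. f (- y + 0) * complex_of_real (\<omega> y * \<omega> (- y + 0)))"
    by (rule weighted_gelfand_pair_indicator_commute[OF assms(1,3,5,8) _ _ f_cont f_supp
          \<open>compact S\<close> \<open>compact D\<close> \<open>open U\<close> D \<open>0 \<in> U\<close>])
  moreover have "(LINT y:S|\<mu>. f y * complex_of_real (\<omega> y * \<omega> (- y + 0)))
      = (\<integral>x. f x * complex_of_real (\<omega> x * \<omega> (- x)) \<partial>\<mu>)"
    by (subst set_lebesgue_integral_eq_integral) (use f_supp in fastforce)+
  moreover have "(LINT y:D|\<mu>. f (- y + 0) * complex_of_real (\<omega> y * \<omega> (- y + 0)))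
      = (\<integral>x. f (- x) * complex_of_real (\<omega> (- x) * \<omega> x) \<partial>\<mu>)"
    by (subst set_lebesgue_integral_eq_integral)
      (use f_minus_supp in \<open>auto simp: mult.commute\<close>)
  ultimately show ?thesis
    by simp
qed

end
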